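(* Consider the system $\Sigma$, let $d:=\dim\ker D$, and suppose $\dim\mathcal{U}_{\rm imp}=f$ (where $f\ge 1$). Let $N$ be a matrix whose columns form a basis of $\ker\mathcal{M}_{f-d+1}$. Then: 1. $\mathcal{R}_s=\operatorname{img}\big(\begin{bmatrix}B&AB&\cdots&A^{f-d}B\end{bmatrix}N\big)$; 2. $\dim\mathcal{R}_s=f$.
   Context: $\Sigma$ is the system $\dot x=Ax+Bu$, $y=Cx+Du$ with $A\in\mathbb{R}^{n\times n}$, $B\in\mathbb{R}^{n\times m}$, $C\in\mathbb{R}^{p\times n}$, $D\in\mathbb{R}^{p\times m}$, transfer matrix $G(s)=C(sI_n-A)^{-1}B+D$. Impulsive-smooth inputs are distributions $u=u_{\rm reg}+\sum_{i=0}^k a_i\delta^{(i)}$ with $u_{\rm reg}$ the restriction to $\mathbb{R}_+$ of a $C^\infty(\mathbb{R},\mathbb{R}^m)$ function and $a_i\in\mathbb{R}^m$. A state $x_1\in\mathbb{R}^n$ is strongly reachable if there is an impulsive-smooth input $u$ such that the state trajectory from $x(0^-)=0$ satisfies $x(0^+)=x_1$ and the output is impulse-free (restriction to $\mathbb{R}_+$ of a $C^\infty$ function); the set of such states is the strongly reachable subspace $\mathcal{R}_s$. It is known (Hautus–Silverman) that $\mathcal{R}_s$ equals the stationary value of the nondecreasing sequence $\mathcal{R}_0=\{0\}$, $\mathcal{R}_{i+1}=\{Aw+B\alpha : w\in\mathcal{R}_i,\ \alpha\in\mathbb{R}^m,\ Cw+D\alpha=0\}$ (if $\mathcal{R}_{i+1}=\mathcal{R}_i$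 then $\mathcal{R}_s=\mathcal{R}_i$). An input $\sum_{i=0}^k u_i\delta^{(i)}$ ($u_i\in\mathbb{R}^m$) is an admissible impulsive input if the output from zero initial state is impulse-free, equivalently $G(s)\sum_i u_is^i$ is strictly proper; these form the vector space $\mathcal{U}_{\rm imp}$. For $k\ge1$, $\mathcal{M}_k$ is the $k\times k$ block matrix (blocks $p\times m$) whose $(i,j)$ block is $0$ if $i+j\le k$, $D$ if $i+j=k+1$, and $CA^{i+j-k-2}B$ if $i+j\ge k+2$ (so $\mathcal{M}_1=D$). *)

theory Defs
  imports "HOL-Analysis.Analysis" "HOL-Library.Function_Algebras"
begin

primrec mpow :: "real^'n^'n \<Rightarrow> nat \<Rightarrow> real^'n^'n" where
  "mpow A 0 = mat 1"
| "mpow A (Suc j) = A ** mpow A j"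

primrec Rseq :: "real^'n^'n \<Rightarrow> real^'m^'n \<Rightarrow> real^'n^'p \<Rightarrow> real^'m^'p \<Rightarrow> nat \<Rightarrow> (real^'n) set" where
  "Rseq A B C D 0 = {0}"
| "Rseq A B C D (Suc i) =
     {A *v w + B *v \<alpha> | w \<alpha>. w \<in> Rseq A B C D i \<and> C *v w + D *v \<alpha> = 0}"

definition Rs :: "real^'n^'n \<Rightarrow> real^'m^'n \<Rightarrow> real^'n^'p \<Rightarrow> real^'m^'p \<Rightarrow> (real^'n) set" where
  "Rs A B C D = Rseq A B C D (LEAST i. Rseq A B C D (Suc i) = Rseq A B C D i)"

text \<open>Markov parameters: G(s) = D + sum_(l>=0) C A^l B s^(-l-1) = sum_l markov l s^(-l).\<close>
definition markov :: "real^'n^'n \<Rightarrow> real^'m^'n \<Rightarrow> real^'n^'p \<Rightarrow> real^'m^'p \<Rightarrow> nat \<Rightarrow> real^'m^'p" where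
  "markov A B C D l = (if l = 0 then D else C ** mpow A (l - 1) ** B)"

text \<open>An impulsive input sum_i u_i delta^(i) is represented by its coefficient sequence
  u :: nat => R^m with finite support. It is admissible iff G(s) sum_i u_i s^i is strictly
  proper, i.e. the coefficient of s^j vanishes for every j >= 0 in the expansion
  G(s) u(s) = sum_j (sum_(i>=j) markov (i-j) u_i) s^j + (strictly proper part).\<close>
definition Uimp :: "real^'n^'n \<Rightarrow> real^'m^'n \<Rightarrow> real^'n^'p \<Rightarrow> real^'m^'p \<Rightarrow> (nat \<Rightarrow> real^'m) set" where
  "Uimp A B C D = {u. finite {i. u i \<noteq> 0} \<and>
     (\<forall>j. (\<Sum>i\<in>{i. j \<le> i \<and> u i \<noteq> 0}. markov A B C D (i - j) *v u i) = 0)}"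

definition sscale :: "real \<Rightarrow> (nat \<Rightarrow> real^'m) \<Rightarrow> (nat \<Rightarrow> real^'m)" where
  "sscale c u = (\<lambda>i. c *\<^sub>R u i)"

definition Mblk :: "real^'n^'n \<Rightarrow> real^'m^'n \<Rightarrow> real^'n^'p \<Rightarrow> real^'m^'p \<Rightarrow> nat \<Rightarrow> nat \<Rightarrow> nat \<Rightarrow> real^'m^'p" where
  "Mblk A B C D k i j =
     (if i + j \<le> k then 0 else if i + j = k + 1 then D else C ** mpow A (i + j - k - 2) ** B)"

text \<open>Kernel of M_k: block vectors (v_1,...,v_k) in (R^m)^k, represented as sequences
  v :: nat => R^m vanishing outside {1..k}.\<close>
definition kerM :: "real^'n^'n \<Rightarrow> real^'m^'n \<Rightarrow> real^'n^'p \<Rightarrow> real^'m^'p \<Rightarrow> nat \<Rightarrow> (nat \<Rightarrow> real^'m) set" where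
  "kerM A B C D k = {v. (\<forall>i. i \<notin> {1..k} \<longrightarrow> v i = 0) \<and>
     (\<forall>i\<in>{1..k}. (\<Sum>j=1..k. Mblk A B C D k i j *v v j) = 0)}"

definition ctrl :: "real^'n^'n \<Rightarrow> real^'m^'n \<Rightarrow> nat \<Rightarrow> (nat \<Rightarrow> real^'m) \<Rightarrow> real^'n" where
  "ctrl A B k v = (\<Sum>j=1..k. (mpow A (j - 1) ** B) *v v j)"

end

theory Submission
  imports Defs
begin

(* The state x(0+) reached by an admissible impulsive input u = \<Sum> u_l \<delta>^(l) is
   \<Sum> A^l B u_l, and R_i consists exactly of the states reached by admissible inputs of
   degree < i.  If dim U_imp = f \<ge> 1, then U_imp is finite-dimensional, so its elements have
   uniformly bounded degree.  A nonzero admissible input reaching the zero state could be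
   delayed (prefixed by zeros) indefinitely while staying admissible, contradicting this
   bound; hence u \<mapsto> x(0+) is injective on U_imp and R_s is isomorphic to U_imp.
   The chain R_1 \<subset> R_2 \<subset> ... starts at dimension dim ker D = d (again by injectivity)
   and grows strictly until it becomes stationary at dimension f, so it is stationary from
   index f - d + 1 on.  Finally, the block rows of M_k are precisely the admissibility
   conditions for inputs of degree < k, so R_k is the image of ker M_k under
   [B AB ... A^(k-1) B]. *)

interpretation seq: vector_space "sscale :: real \<Rightarrow> (nat \<Rightarrow> real^'m) \<Rightarrow> _"
  by unfold_locales (auto simp: sscale_def fun_eq_iff algebra_simps)

interpretation seq_vec: vector_space_pair "sscale :: real \<Rightarrow> (nat \<Rightarrow> real^'m) \<Rightarrow> _"
    "scaleR :: real \<Rightarrow> real^'n \<Rightarrow> _"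
  by unfold_locales

(* Unlike the library's dim_image_eq, no finite-dimensionality of the domain is needed. *)
lemma (in vector_space_pair) dim_image_eq_of_inj_on:
  assumes "Vector_Spaces.linear s1 s2 f" and "inj_on f (vs1.span S)"
  shows "vs2.dim (f ` S) = vs1.dim S"
proof -
  interpret lf: Vector_Spaces.linear s1 s2 f by fact
  obtain B where B: "B \<subseteq> S" "vs1.independent B" "S \<subseteq> vs1.span B" "card B = vs1.dim S"
    by (rule vs1.basis_exists)
  have span_B: "vs1.span B = vs1.span S"
    unfolding vs1.span_eq using B(1,3) vs1.span_superset by blast
  have "vs2.span (f ` B) = vs2.span (f ` S)"
    by (simp add: lf.span_image span_B)
  moreover have "vs2.independent (f ` B)"
    using lf.dependent_inj_imageD[of B] B(2) assms(2) span_B by auto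
  ultimately have "vs2.dim (f ` S) = card (f ` B)"
    by (rule vs2.dim_eq_card)
  also have "\<dots> = card B"
    using inj_on_subset[OF assms(2)] B(1) vs1.span_superset by (intro card_image) blast
  finally show ?thesis using B(4) by simp
qed

lemma dim_strict_chain:
  fixes S :: "nat \<Rightarrow> 'a::euclidean_space set"
  assumes "\<And>i. subspace (S i)" and "\<And>i. a \<le> i \<Longrightarrow> i < b \<Longrightarrow> S i \<subset> S (Suc i)"
    and "a \<le> b"
  shows "dim (S a) + (b - a) \<le> dim (S b)"
proof -
  have "dim (S a) + (c - a) \<le> dim (S c)" if "a \<le> c" "c \<le> b" for c
    using that
  proof (induction c rule: dec_induct)
    case (step c)
    have "span (S c) \<subset> span (S (Suc c))"
      using assms(1,2) step.hyps step.prems by (simp add: span_eq_iff[THEN iffD2])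
    then have "dim (S c) < dim (S (Suc c))"
      by (rule dim_psubset)
    with step show ?case by simp
  qed simp
  then show ?thesis
    using assms(3) by simp
qed

lemma sum_fun_apply: "(\<Sum>k\<in>S. F k) i = (\<Sum>k\<in>S. F k i)"
  by (induction S rule: infinite_finite_induct) auto

lemma seq_span_set_list:
  fixes N :: "(nat \<Rightarrow> real^'m) list"
  assumes "distinct N"
  shows "seq.span (set N) = {(\<lambda>i. \<Sum>q<length N. c q *\<^sub>R (N ! q) i) | c. True}"
proof -
  have comb: "(\<lambda>i. \<Sum>q<length N. c q *\<^sub>R (N ! q) i) = (\<Sum>q<length N. sscale (c q) (N ! q))" for c
    by (simp add: fun_eq_iff sum_fun_apply sscale_def)
  have inj: "inj_on (nth N) {..<length N}"
    using inj_on_nth[OF assms] by simp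
  have set_N: "set N = nth N ` {..<length N}"
    by (auto simp: set_conv_nth)
  show ?thesis
    unfolding comb
  proof (intro set_eqI iffI)
    fix x assume "x \<in> seq.span (set N)"
    then obtain g where "x = (\<Sum>y\<in>set N. sscale (g y) y)"
      using seq.span_finite[of "set N"] by auto
    then have "x = (\<Sum>q<length N. sscale (g (N ! q)) (N ! q))"
      unfolding set_N sum.reindex[OF inj] by simp
    then show "x \<in> {\<Sum>q<length N. sscale (c q) (N ! q) | c. True}"
      by (auto intro!: exI[of _ "\<lambda>q. g (N ! q)"])
  next
    fix x assume "x \<in> {\<Sum>q<length N. sscale (c q) (N ! q) | c. True}"
    then obtain c where x: "x = (\<Sum>q<length N. sscale (c q) (N ! q))"
      by blast
    have "sscale (c q) (N ! q) \<in> seq.span (set N)" if "q \<in> {..<length N}" for q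
      using that by (simp add: seq.span_scale seq.span_base)
    then show "x \<in> seq.span (set N)"
      unfolding x by (rule seq.span_sum)
  qed
qed

definition vanishes_from :: "(nat \<Rightarrow> 'a::zero) \<Rightarrow> nat \<Rightarrow> bool" where
  "vanishes_from u K \<longleftrightarrow> (\<forall>i\<ge>K. u i = 0)"

lemma finite_support_iff_vanishes_from: "finite {i. u i \<noteq> 0} \<longleftrightarrow> (\<exists>K. vanishes_from u K)"
  unfolding vanishes_from_def finite_nat_set_iff_bounded by (auto simp: not_le[symmetric])

lemma vanishes_from_mono: "vanishes_from u K \<Longrightarrow> K \<le> L \<Longrightarrow> vanishes_from u L"
  by (auto simp: vanishes_from_def)

lemma vanishes_from_case_nat_iff [simp]:
  "vanishes_from (case_nat a u) (Suc K) \<longleftrightarrow> vanishes_from u K"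
  unfolding vanishes_from_def by (metis Suc_le_D Suc_le_mono nat.case(2))

lemma ex_case_nat_iff: "(\<exists>a u. P (case_nat a u)) \<longleftrightarrow> (\<exists>v. P v)"
proof
  assume "\<exists>v. P v"
  then obtain v where "P v" ..
  moreover have "case_nat (v 0) (\<lambda>i. v (Suc i)) = v"
    by (auto simp: fun_eq_iff split: nat.split)
  ultimately show "\<exists>a u. P (case_nat a u)"
    by (intro exI[of _ "v 0"] exI[of _ "\<lambda>i. v (Suc i)"]) simp
qed blast

lemma subspace_vanishes_from: "seq.subspace {u :: nat \<Rightarrow> real^'m. vanishes_from u K}"
  unfolding seq.subspace_def vanishes_from_def sscale_def by simp

(* seq.dim U = 0 for infinite-dimensional U, so seq.dim U \<noteq> 0 yields a finite basis. *)
lemma finite_dim_seq_vanish_uniformly: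
  fixes U :: "(nat \<Rightarrow> real^'m) set"
  assumes "\<forall>u\<in>U. finite {i. u i \<noteq> 0}" and "seq.dim U \<noteq> 0"
  obtains K where "\<forall>u\<in>U. vanishes_from u K"
proof -
  obtain b where b: "b \<subseteq> U" "seq.independent b" "U \<subseteq> seq.span b" "card b = seq.dim U"
    by (rule seq.basis_exists)
  have "finite b"
    using assms(2) b(4) card.infinite by force
  then have "finite (\<Union>u\<in>b. {i. u i \<noteq> 0})"
    using assms(1) b(1) by (intro finite_UN_I) auto
  then obtain K where "\<forall>i\<in>(\<Union>u\<in>b. {i. u i \<noteq> 0}). i < K"
    unfolding finite_nat_set_iff_bounded ..
  then have K: "\<forall>u\<in>b. vanishes_from u K"
    unfolding vanishes_from_def by (meson UN_I mem_Collect_eq not_le)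
  then have "seq.span b \<subseteq> {u. vanishes_from u K}"
    using subspace_vanishes_from by (intro seq.span_minimal) auto
  with b(3) show thesis
    using that by blast
qed

(* The state x(0+) reached from x(0-) = 0 by the input \<Sum>_(l<K) u_l \<delta>^(l). *)
definition impulse_state ::
  "real^'n^'n \<Rightarrow> real^'m^'n \<Rightarrow> nat \<Rightarrow> (nat \<Rightarrow> real^'m) \<Rightarrow> real^'n"
  where "impulse_state A B K u = (\<Sum>l<K. (mpow A l ** B) *v u l)"

(* For u vanishing from K, the coefficient of s^j in G(s) \<Sum>_l u_l s^l, using the Markov
   expansion of G. *)
definition impulse_coeff ::
  "real^'n^'n \<Rightarrow> real^'m^'n \<Rightarrow> real^'n^'p \<Rightarrow> real^'m^'p \<Rightarrow> nat \<Rightarrow>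
    (nat \<Rightarrow> real^'m) \<Rightarrow> nat \<Rightarrow> real^'p"
  where "impulse_coeff A B C D K u j = (\<Sum>l<K. markov A B C D l *v u (j + l))"

lemma impulse_state_mono:
  "vanishes_from u K \<Longrightarrow> K \<le> L \<Longrightarrow> impulse_state A B L u = impulse_state A B K u"
  unfolding impulse_state_def
  by (rule sum.mono_neutral_right) (auto simp: vanishes_from_def)

lemma impulse_coeff_mono:
  "vanishes_from u K \<Longrightarrow> K \<le> L \<Longrightarrow> impulse_coeff A B C D L u j = impulse_coeff A B C D K u j"
  unfolding impulse_coeff_def
  by (rule sum.mono_neutral_right) (auto simp: vanishes_from_def)

lemma impulse_coeff_beyond:
  "vanishes_from u K \<Longrightarrow> K \<le> j \<Longrightarrow> impulse_coeff A B C D K u j = 0"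
  unfolding impulse_coeff_def vanishes_from_def by (auto intro!: sum.neutral)

lemma Uimp_iff_impulse_coeff:
  assumes "vanishes_from u K"
  shows "u \<in> Uimp A B C D \<longleftrightarrow> (\<forall>j. impulse_coeff A B C D K u j = 0)"
proof -
  have coeff: "(\<Sum>i\<in>{i. j \<le> i \<and> u i \<noteq> 0}. markov A B C D (i - j) *v u i) =
      impulse_coeff A B C D K u j" for j
  proof -
    have "impulse_coeff A B C D K u j = (\<Sum>i\<in>(+) j ` {..<K}. markov A B C D (i - j) *v u i)"
      unfolding impulse_coeff_def by (subst sum.reindex) auto
    also have "\<dots> = (\<Sum>i\<in>{i. j \<le> i \<and> u i \<noteq> 0}. markov A B C D (i - j) *v u i)"
    proof (rule sum.mono_neutral_right)
      show "{i. j \<le> i \<and> u i \<noteq> 0} \<subseteq> (+) j ` {..<K}"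
      proof
        fix i assume "i \<in> {i. j \<le> i \<and> u i \<noteq> 0}"
        with assms have "j \<le> i" "i < K" by (auto simp: vanishes_from_def not_le[symmetric])
        then show "i \<in> (+) j ` {..<K}" by (intro image_eqI[of _ _ "i - j"]) auto
      qed
    qed auto
    finally show ?thesis by simp
  qed
  have "finite {i. u i \<noteq> 0}"
    using assms finite_support_iff_vanishes_from by blast
  then show ?thesis
    unfolding Uimp_def by (simp add: coeff)
qed

lemma impulse_state_case_nat:
  "impulse_state A B (Suc K) (case_nat a u) = A *v impulse_state A B K u + B *v a"
  unfolding impulse_state_def
  by (subst sum.lessThan_Suc_shift)
    (simp add: vec.sum matrix_vector_mul_assoc matrix_mul_assoc add.commute)

lemma impulse_coeff_case_nat_0:
  "impulse_coeff A B C D (Suc K) (case_nat a u) 0 = C *v impulse_state A B K u + D *v a"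
  unfolding impulse_coeff_def impulse_state_def
  by (subst sum.lessThan_Suc_shift)
    (simp add: markov_def vec.sum matrix_vector_mul_assoc matrix_mul_assoc add.commute)

lemma case_nat_in_Uimp_iff:
  assumes "vanishes_from u K"
  shows "case_nat a u \<in> Uimp A B C D \<longleftrightarrow>
           u \<in> Uimp A B C D \<and> C *v impulse_state A B K u + D *v a = 0"
proof -
  let ?c = "impulse_coeff A B C D (Suc K) (case_nat a u)"
  have shift: "?c (Suc j) = impulse_coeff A B C D K u j" for j
    using impulse_coeff_mono[OF assms, of "Suc K"] by (simp add: impulse_coeff_def)
  have "case_nat a u \<in> Uimp A B C D \<longleftrightarrow> (\<forall>j. ?c j = 0)"
    using assms by (intro Uimp_iff_impulse_coeff) simp
  also have "\<dots> \<longleftrightarrow> ?c 0 = 0 \<and> (\<forall>j. ?c (Suc j) = 0)"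
    by (metis not0_implies_Suc)
  also have "\<dots> \<longleftrightarrow> C *v impulse_state A B K u + D *v a = 0 \<and> u \<in> Uimp A B C D"
    by (simp add: shift impulse_coeff_case_nat_0 Uimp_iff_impulse_coeff[OF assms])
  finally show ?thesis by blast
qed

lemma delay_null_input:
  assumes "u \<in> Uimp A B C D" "vanishes_from u K" "impulse_state A B K u = 0"
  shows "case_nat 0 u \<in> Uimp A B C D" "impulse_state A B (Suc K) (case_nat 0 u) = 0"
  using assms by (simp_all add: case_nat_in_Uimp_iff impulse_state_case_nat)

lemma linear_impulse_state: "Vector_Spaces.linear sscale scaleR (impulse_state A B K)"
  by (auto simp: Vector_Spaces.linear_iff seq.vector_space_axioms real_vector.vector_space_axioms
      impulse_state_def sscale_def matrix_vector_right_distrib matrix_vector_mult_scaleR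
      sum.distrib scaleR_sum_right)

lemma impulse_state_diff:
  "impulse_state A B K (u - v) = impulse_state A B K u - impulse_state A B K v"
  unfolding impulse_state_def by (simp add: matrix_vector_mult_diff_distrib sum_subtractf)

lemma impulse_coeff_add:
  "impulse_coeff A B C D K (u + v) j = impulse_coeff A B C D K u j + impulse_coeff A B C D K v j"
  unfolding impulse_coeff_def by (simp add: matrix_vector_right_distrib sum.distrib)

lemma impulse_coeff_sscale:
  "impulse_coeff A B C D K (sscale c u) j = c *\<^sub>R impulse_coeff A B C D K u j"
  unfolding impulse_coeff_def sscale_def by (simp add: matrix_vector_mult_scaleR scaleR_sum_right)

lemma subspace_Uimp: "seq.subspace (Uimp A B C D)"
  unfolding seq.subspace_def
proof (intro conjI ballI allI)
  show "0 \<in> Uimp A B C D"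
    by (simp add: Uimp_def)
next
  fix u v assume u: "u \<in> Uimp A B C D" and v: "v \<in> Uimp A B C D"
  then obtain K L where "vanishes_from u K" "vanishes_from v L"
    unfolding Uimp_def finite_support_iff_vanishes_from by blast
  then have "vanishes_from u (max K L)" "vanishes_from v (max K L)" "vanishes_from (u + v) (max K L)"
    by (auto simp: vanishes_from_def)
  then show "u + v \<in> Uimp A B C D"
    using u v by (simp add: Uimp_iff_impulse_coeff impulse_coeff_add)
next
  fix c u assume u: "u \<in> Uimp A B C D"
  then obtain K where "vanishes_from u K"
    unfolding Uimp_def finite_support_iff_vanishes_from by blast
  moreover from this have "vanishes_from (sscale c u) K"
    by (simp add: vanishes_from_def sscale_def)
  ultimately show "sscale c u \<in> Uimp A B C D"
    using u by (simp add: Uimp_iff_impulse_coeff impulse_coeff_sscale)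
qed

lemma Rseq_eq_impulse_states:
  "Rseq A B C D i = {impulse_state A B i u | u. u \<in> Uimp A B C D \<and> vanishes_from u i}"
proof (induction i)
  case 0
  have "vanishes_from u 0 \<longleftrightarrow> u = 0" for u :: "nat \<Rightarrow> real^'m"
    by (auto simp: vanishes_from_def fun_eq_iff)
  moreover have "0 \<in> Uimp A B C D"
    by (simp add: Uimp_def)
  ultimately show ?case by (auto simp: impulse_state_def)
next
  case (Suc i)
  show ?case
  proof (rule set_eqI)
    fix x
    have "x \<in> Rseq A B C D (Suc i) \<longleftrightarrow>
      (\<exists>\<alpha> u. x = A *v impulse_state A B i u + B *v \<alpha> \<and> u \<in> Uimp A B C D \<and>
         vanishes_from u i \<and> C *v impulse_state A B i u + D *v \<alpha> = 0)"
      unfolding Rseq.simps Suc by blast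
    also have "\<dots> \<longleftrightarrow> (\<exists>\<alpha> u. x = impulse_state A B (Suc i) (case_nat \<alpha> u) \<and>
         case_nat \<alpha> u \<in> Uimp A B C D \<and> vanishes_from (case_nat \<alpha> u) (Suc i))"
      using case_nat_in_Uimp_iff[where K = i]
      unfolding impulse_state_case_nat vanishes_from_case_nat_iff by blast
    also have "\<dots> \<longleftrightarrow> (\<exists>u. x = impulse_state A B (Suc i) u \<and> u \<in> Uimp A B C D
         \<and> vanishes_from u (Suc i))"
      using ex_case_nat_iff[where P = "\<lambda>v. x = impulse_state A B (Suc i) v \<and>
        v \<in> Uimp A B C D \<and> vanishes_from v (Suc i)"] by simp
    finally show "x \<in> Rseq A B C D (Suc i) \<longleftrightarrow>
        x \<in> {impulse_state A B (Suc i) u | u. u \<in> Uimp A B C D \<and> vanishes_from u (Suc i)}"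
      by simp
  qed
qed

lemma Rseq_mono: "Rseq A B C D i \<subseteq> Rseq A B C D (Suc i)"
proof
  fix x assume "x \<in> Rseq A B C D i"
  then obtain u where u: "x = impulse_state A B i u" "u \<in> Uimp A B C D" "vanishes_from u i"
    unfolding Rseq_eq_impulse_states by blast
  moreover have "impulse_state A B (Suc i) u = impulse_state A B i u" "vanishes_from u (Suc i)"
    using impulse_state_mono[OF u(3), of "Suc i" A B] vanishes_from_mono[OF u(3)] by simp_all
  ultimately show "x \<in> Rseq A B C D (Suc i)"
    unfolding Rseq_eq_impulse_states by (auto intro!: exI[of _ u])
qed

lemma subspace_Rseq: "subspace (Rseq A B C D i)"
proof -
  interpret \<Phi>: Vector_Spaces.linear sscale scaleR "impulse_state A B i"
    by (rule linear_impulse_state)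
  have "seq.subspace (Uimp A B C D \<inter> {u. vanishes_from u i})"
    using subspace_Uimp subspace_vanishes_from by (rule seq.subspace_inter)
  then have "subspace (impulse_state A B i ` (Uimp A B C D \<inter> {u. vanishes_from u i}))"
    unfolding subspace_raw_def by (rule \<Phi>.subspace_image)
  moreover have "Rseq A B C D i = impulse_state A B i ` (Uimp A B C D \<inter> {u. vanishes_from u i})"
    unfolding Rseq_eq_impulse_states by blast
  ultimately show ?thesis by simp
qed

lemma Rseq_stationary:
  assumes "Rseq A B C D (Suc i) = Rseq A B C D i" and "i \<le> j"
  shows "Rseq A B C D j = Rseq A B C D i"
  using assms(2)
proof (induction j rule: dec_induct)
  case (step j)
  then have "Rseq A B C D (Suc j) = Rseq A B C D (Suc i)"
    by (simp only: Rseq.simps)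
  with assms(1) show ?case by simp
qed simp

lemma ctrl_case_nat: "ctrl A B k (case_nat 0 u) = impulse_state A B k u"
  unfolding ctrl_def impulse_state_def by (simp add: sum.atLeast1_atMost_eq)

lemma Mblk_row:
  assumes "vanishes_from u k" and "i \<in> {1..k}"
  shows "(\<Sum>j=1..k. Mblk A B C D k i j *v case_nat 0 u j) = impulse_coeff A B C D k u (k - i)"
proof -
  define r where "r = k - i"
  have r: "r < k" "i = k - r" using assms(2) unfolding r_def by auto
  have "(\<Sum>j=1..k. Mblk A B C D k i j *v case_nat 0 u j) = (\<Sum>l<k. Mblk A B C D k i (Suc l) *v u l)"
    by (simp add: sum.atLeast1_atMost_eq)
  also have "\<dots> = (\<Sum>l<k. if l < r then 0 else markov A B C D (l - r) *v u l)"
    using r by (intro sum.cong) (auto simp: Mblk_def markov_def)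
  also have "\<dots> = (\<Sum>l\<in>{r..<k}. markov A B C D (l - r) *v u l)"
    by (rule sum.mono_neutral_cong_right) auto
  also have "\<dots> = (\<Sum>l<k - r. markov A B C D l *v u (r + l))"
    using sum.shift_bounds_nat_ivl[of "\<lambda>l. markov A B C D (l - r) *v u l" 0 r "k - r"] r
    by (simp add: lessThan_atLeast0 add.commute)
  also have "\<dots> = impulse_coeff A B C D k u r"
    unfolding impulse_coeff_def
    by (rule sum.mono_neutral_left) (use assms(1) in \<open>auto simp: vanishes_from_def\<close>)
  finally show ?thesis by (simp add: r_def)
qed

lemma case_nat_in_kerM_iff:
  assumes "vanishes_from u k"
  shows "case_nat 0 u \<in> kerM A B C D k \<longleftrightarrow> u \<in> Uimp A B C D"
proof -
  let ?c = "impulse_coeff A B C D k u"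
  have "\<forall>i. i \<notin> {1..k} \<longrightarrow> case_nat 0 u i = 0"
    using assms by (auto simp: vanishes_from_def split: nat.split)
  then have "case_nat 0 u \<in> kerM A B C D k \<longleftrightarrow>
      (\<forall>i\<in>{1..k}. (\<Sum>j=1..k. Mblk A B C D k i j *v case_nat 0 u j) = 0)"
    unfolding kerM_def by blast
  also have "\<dots> \<longleftrightarrow> (\<forall>i\<in>{1..k}. ?c (k - i) = 0)"
  proof (rule ball_cong[OF refl])
    fix i assume "i \<in> {1..k}"
    then show "((\<Sum>j=1..k. Mblk A B C D k i j *v case_nat 0 u j) = 0) \<longleftrightarrow> ?c (k - i) = 0"
      by (simp only: Mblk_row[OF assms])
  qed
  also have "\<dots> \<longleftrightarrow> (\<forall>j. ?c j = 0)"
  proof (intro iffI allI)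
    fix j assume rows: "\<forall>i\<in>{1..k}. ?c (k - i) = 0"
    show "?c j = 0"
    proof (cases "j < k")
      case True
      then have "k - j \<in> {1..k}" by auto
      with rows True show ?thesis by force
    qed (simp add: impulse_coeff_beyond[OF assms])
  qed auto
  finally show ?thesis
    by (simp add: Uimp_iff_impulse_coeff[OF assms])
qed

(* Block j (1 \<le> j \<le> k) of a kernel vector is the coefficient u_(j-1) of an admissible input. *)
lemma kerM_eq: "kerM A B C D k = case_nat 0 ` {u \<in> Uimp A B C D. vanishes_from u k}"
proof (intro set_eqI iffI)
  fix v assume v: "v \<in> kerM A B C D k"
  define u where "u = (\<lambda>i. v (Suc i))"
  have "v = case_nat 0 u"
    using v by (auto simp: kerM_def u_def fun_eq_iff split: nat.split)
  moreover have "vanishes_from u k"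
    using v by (auto simp: kerM_def u_def vanishes_from_def)
  ultimately show "v \<in> case_nat 0 ` {u \<in> Uimp A B C D. vanishes_from u k}"
    using v case_nat_in_kerM_iff by blast
qed (auto simp: case_nat_in_kerM_iff)

lemma Rseq_eq_ctrl_kerM: "Rseq A B C D k = ctrl A B k ` kerM A B C D k"
  unfolding kerM_eq image_image ctrl_case_nat Rseq_eq_impulse_states by blast

context
  fixes A :: "real^'n^'n" and B :: "real^'m^'n" and C :: "real^'n^'p" and D :: "real^'m^'p"
  assumes dim_Uimp_nonzero: "seq.dim (Uimp A B C D) \<noteq> 0"
begin

lemma Uimp_vanish_uniformly:
  obtains K where "\<forall>u\<in>Uimp A B C D. vanishes_from u K"
  using finite_dim_seq_vanish_uniformly[OF _ dim_Uimp_nonzero] by (auto simp: Uimp_def)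

(* A nonzero null input could be delayed arbitrarily long, beyond the uniform bound. *)
lemma null_input_eq_0:
  assumes u: "u \<in> Uimp A B C D" "vanishes_from u L" "impulse_state A B L u = 0"
  shows "u = 0"
proof
  fix i
  obtain K where K: "\<forall>v\<in>Uimp A B C D. vanishes_from v K"
    by (rule Uimp_vanish_uniformly)
  let ?delay = "\<lambda>k. (case_nat 0 ^^ k) u"
  have "?delay k \<in> Uimp A B C D \<and> vanishes_from (?delay k) (L + k)
      \<and> impulse_state A B (L + k) (?delay k) = 0" for k
  proof (induction k)
    case (Suc k)
    then show ?case
      using delay_null_input[of "?delay k" A B C D "L + k"] by simp
  qed (simp add: u)
  moreover have "?delay k (k + i) = u i" for k
    by (induction k) simp_all
  ultimately show "u i = 0 i"
    using K by (metis vanishes_from_def le_add1 zero_fun_apply)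
qed

lemma inj_on_impulse_state:
  assumes "\<forall>u\<in>Uimp A B C D. vanishes_from u K"
  shows "inj_on (impulse_state A B K) (Uimp A B C D)"
proof (rule inj_onI)
  fix u v
  assume uv: "u \<in> Uimp A B C D" "v \<in> Uimp A B C D"
    "impulse_state A B K u = impulse_state A B K v"
  have "u - v \<in> Uimp A B C D"
    using seq.subspace_diff[OF subspace_Uimp uv(1,2)] .
  moreover have "vanishes_from u K" "vanishes_from v K"
    using assms uv(1,2) by blast+
  then have "vanishes_from (u - v) K"
    by (simp add: vanishes_from_def)
  ultimately have "u - v = 0"
    using uv(3) by (intro null_input_eq_0) (simp_all add: impulse_state_diff)
  then show "u = v" by simp
qed

lemma dim_Rseq_eventually:
  obtains K where "\<forall>j\<ge>K. dim (Rseq A B C D j) = seq.dim (Uimp A B C D)"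
proof -
  obtain K where K: "\<forall>u\<in>Uimp A B C D. vanishes_from u K"
    by (rule Uimp_vanish_uniformly)
  have "dim (Rseq A B C D j) = seq.dim (Uimp A B C D)" if "K \<le> j" for j
  proof -
    have vanish: "\<forall>u\<in>Uimp A B C D. vanishes_from u j"
      using K vanishes_from_mono that by blast
    then have "Rseq A B C D j = impulse_state A B j ` Uimp A B C D"
      unfolding Rseq_eq_impulse_states by blast
    moreover have "inj_on (impulse_state A B j) (seq.span (Uimp A B C D))"
      using inj_on_impulse_state[OF vanish]
      by (simp add: seq.span_eq_iff[THEN iffD2, OF subspace_Uimp])
    ultimately show ?thesis
      unfolding dim_raw_def
      by (simp add: seq_vec.dim_image_eq_of_inj_on[OF linear_impulse_state])
  qed
  then show thesis
    using that by blast
qed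

lemma dim_Rseq_1: "dim (Rseq A B C D 1) = dim {\<alpha>. D *v \<alpha> = 0}"
proof -
  have "Rseq A B C D 1 = (*v) B ` {\<alpha>. D *v \<alpha> = 0}"
    by auto
  moreover have "subspace {\<alpha>. D *v \<alpha> = 0}"
    by (auto simp: subspace_def matrix_vector_right_distrib matrix_vector_mult_scaleR)
  moreover have "\<alpha> = 0" if "D *v \<alpha> = 0" "B *v \<alpha> = 0" for \<alpha>
  proof -
    have "case_nat \<alpha> 0 \<in> Uimp A B C D" "impulse_state A B 1 (case_nat \<alpha> 0) = 0"
      using that case_nat_in_Uimp_iff[of 0 0 \<alpha> A B C D]
      by (simp_all add: vanishes_from_def impulse_state_def Uimp_def)
    moreover have "vanishes_from (case_nat \<alpha> 0) 1"
      by (simp add: vanishes_from_def split: nat.split)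
    ultimately have "case_nat \<alpha> 0 = 0"
      using null_input_eq_0 by blast
    then show "\<alpha> = 0"
      by (metis nat.case(1) zero_fun_apply)
  qed
  ultimately show ?thesis
    by (simp add: dim_image_eq linear_inj_on_iff_eq_0 span_eq_iff[THEN iffD2])
qed

lemma Rs_eq_Rseq_and_dim_Rs:
  shows "Rs A B C D = Rseq A B C D (seq.dim (Uimp A B C D) - dim {\<alpha>. D *v \<alpha> = 0} + 1)"
    and "dim (Rs A B C D) = seq.dim (Uimp A B C D)"
proof -
  let ?R = "Rseq A B C D" and ?f = "seq.dim (Uimp A B C D)" and ?d = "dim {\<alpha>. D *v \<alpha> = 0}"
  obtain K where K: "\<forall>j\<ge>K. dim (?R j) = ?f"
    by (rule dim_Rseq_eventually)
  define i0 where "i0 = (LEAST i. ?R (Suc i) = ?R i)"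
  have "dim (?R (Suc K)) \<le> dim (?R K)"
    using K by (metis le_SucI order_refl)
  note stat_K = subspace_dim_equal[OF subspace_Rseq subspace_Rseq Rseq_mono this, symmetric]
  have stat: "?R (Suc i0) = ?R i0"
    unfolding i0_def using stat_K by (rule LeastI)
  have later: "?R j = ?R i0" if "i0 \<le> j" for j
    using Rseq_stationary[OF stat that] .
  have "dim (?R (max i0 K)) = ?f"
    using K by simp
  then have dim_i0: "dim (?R i0) = ?f"
    using later[of "max i0 K"] by simp
  have "i0 \<noteq> 0"
    using dim_i0 dim_Uimp_nonzero by (intro notI) simp
  have strict: "?R i \<subset> ?R (Suc i)" if "1 \<le> i" "i < i0" for i
    using Rseq_mono[of A B C D i] not_less_Least[OF that(2)[unfolded i0_def]] by blast
  have "dim (?R 1) + (i0 - 1) \<le> dim (?R i0)"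
    using dim_strict_chain[of ?R 1 i0, OF subspace_Rseq strict] \<open>i0 \<noteq> 0\<close> by linarith
  then have "i0 \<le> ?f - ?d + 1"
    using dim_Rseq_1 dim_i0 by simp
  then show "Rs A B C D = ?R (?f - ?d + 1)"
    unfolding Rs_def i0_def[symmetric] by (rule later[symmetric])
  show "dim (Rs A B C D) = ?f"
    unfolding Rs_def i0_def[symmetric] using dim_i0 .
qed

end

theorem mainTheorem4:
  fixes A :: "real^'n^'n" and B :: "real^'m^'n" and C :: "real^'n^'p" and D :: "real^'m^'p"
    and f d :: nat and N :: "(nat \<Rightarrow> real^'m) list"
  assumes d_def: "d = dim {x :: real^'m. D *v x = 0}"
    and f_def: "vector_space.dim sscale (Uimp A B C D) = f"
    and f_pos: "f \<ge> 1"
    and N_in: "set N \<subseteq> kerM A B C D (f - d + 1)"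
    and N_distinct: "distinct N"
    and N_indep: "\<not> module.dependent sscale (set N)"
    and N_span: "module.span sscale (set N) = kerM A B C D (f - d + 1)"
  shows "Rs A B C D =
           {ctrl A B (f - d + 1) (\<lambda>i. \<Sum>q<length N. c q *\<^sub>R (N ! q) i) | c. True}
         \<and> dim (Rs A B C D) = f"
proof -
  have nonzero: "seq.dim (Uimp A B C D) \<noteq> 0"
    using f_def f_pos by simp
  have "Rs A B C D = Rseq A B C D (f - d + 1)"
    using Rs_eq_Rseq_and_dim_Rs(1)[OF nonzero] unfolding f_def d_def .
  also have "\<dots> = ctrl A B (f - d + 1) ` kerM A B C D (f - d + 1)"
    by (rule Rseq_eq_ctrl_kerM)
  also have "kerM A B C D (f - d + 1) = {(\<lambda>i. \<Sum>q<length N. c q *\<^sub>R (N ! q) i) | c. True}"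
    using seq_span_set_list[OF N_distinct] N_span by simp
  finally show ?thesis
    using Rs_eq_Rseq_and_dim_Rs(2)[OF nonzero] f_def by blast
qed

end
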